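(* Fix a joint distribution of $(T,X)$ satisfying the conditions in the context, and let $b^\star(t,x)=f_X(x)\,w(t,x)$ be the full NRWE weights. Suppose there exists a weight function $a:\mathbb R\times\mathcal X\to\mathbb R$ such that: (1) for every data-generating process of the form $Y=m(T,X)+\varepsilon$, $E[\varepsilon\mid T,X]=0$, with $t\mapsto m(t,x)$ differentiable with continuous derivative $\partial_t m(t,x)$ and $E[|\partial_t m(T,X)|]<\infty$, and with this fixed distribution of $(T,X)$, the population OLS coefficient $\beta$ on $T$ satisfies $\beta=\int\!\!\int \partial_t m(t,x)\,a(t,x)\,dt\,dx$; and (2) for each $x$, the map $t\mapsto a(t,x)$ is continuous and differentiable on $\mathbb R$, and $\int\!\!\int |a(t,x)|\,dt\,dx<\infty$. Then $a(t,x)=b^\star(t,x)$ for almost every $(t,x)$.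
   Context: Fix a joint distribution of $(T,X)$ ($T$ a continuous variable of interest, $X$ a vector of controls containing a constant, with support $\mathcal X$). Assume that for almost every $x\in\mathcal X$, the conditional distribution of $T$ given $X=x$ admits a density $f_{T\mid X}(\cdot\mid x)$ with $0<\mathrm{Var}(T\mid X=x)<\infty$, and $E[Y\mid t,x]<\infty$ for every $t,x$. Consider data-generating processes $Y=m(T,X)+\varepsilon$ with $E[\varepsilon\mid T,X]=0$, where for each $x$, $t\mapsto m(t,x)$ is differentiable with continuous derivative $\partial_t m(t,x)$ and $E[|\partial_t m(T,X)|]<\infty$. For each such process, $\beta$ is the coefficient on $T$ in the population OLS regression of $Y$ on $T$ and $X$. Let $\mu(x)=E[T\mid X=x]$ and assume $E[T\mid X]$ is a linear function of $X$, so that (by the paper's multivariate Yitzhaki theorem) $\beta$ equals the Naive Regression-Weighted Effect $\mathrm{NRWE}=E_X\big[\int \partial_t E[Y\mid t,X]\,w(t,X)\,dt\big]$, with within-cell weights $w(t,x)=\dfrac{E[T-\mu(x)\mid T>t,X=x]\,P(T>t\mid X=x)}{E_X[\mathrm{Var}(T\mid X)]}$. The full NRWE weights are $b^\star(t,x)=f_X(x)\,w(t,x)$, where $f_X$ is the density of $X$, so that $\beta=\int\!\!\int \partial_t m(t,x)\,b^\star(t,x)\,dt\,dx$. *)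

theory Defs
  imports "HOL-Analysis.Analysis"
begin

text \<open>X has density fX with respect to a
  sigma-finite reference measure nu on real^'k (the measure "dx"); the conditional density
  of T given X = x (w.r.t. Lebesgue measure) is fT x.\<close>

definition supp_X :: "('x \<Rightarrow> real) \<Rightarrow> 'x set" where
  "supp_X fX = {x. 0 < fX x}"

definition joint_law :: "'x measure \<Rightarrow> ('x \<Rightarrow> real) \<Rightarrow> ('x \<Rightarrow> real \<Rightarrow> real) \<Rightarrow> (real \<times> 'x) measure" where
  "joint_law nu fX fT = density (lborel \<Otimes>\<^sub>M nu) (\<lambda>z. ennreal (fX (snd z) * fT (snd z) (fst z)))"

definition cond_mean :: "('x \<Rightarrow> real \<Rightarrow> real) \<Rightarrow> 'x \<Rightarrow> real" where
  "cond_mean fT x = (\<integral>s. s * fT x s \<partial>lborel)"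

definition cond_var :: "('x \<Rightarrow> real \<Rightarrow> real) \<Rightarrow> 'x \<Rightarrow> real" where
  "cond_var fT x = (\<integral>s. (s - cond_mean fT x)\<^sup>2 * fT x s \<partial>lborel)"

definition mean_cond_var :: "'x measure \<Rightarrow> ('x \<Rightarrow> real) \<Rightarrow> ('x \<Rightarrow> real \<Rightarrow> real) \<Rightarrow> real" where
  "mean_cond_var nu fX fT = (\<integral>x. fX x * cond_var fT x \<partial>nu)"

definition cond_surv :: "('x \<Rightarrow> real \<Rightarrow> real) \<Rightarrow> real \<Rightarrow> 'x \<Rightarrow> real" where
  "cond_surv fT t x = (LINT s:{t<..}|lborel. fT x s)"

definition cond_dev_gt :: "('x \<Rightarrow> real \<Rightarrow> real) \<Rightarrow> real \<Rightarrow> 'x \<Rightarrow> real" where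
  "cond_dev_gt fT t x = (LINT s:{t<..}|lborel. (s - cond_mean fT x) * fT x s) / cond_surv fT t x"

definition nrwe_w :: "'x measure \<Rightarrow> ('x \<Rightarrow> real) \<Rightarrow> ('x \<Rightarrow> real \<Rightarrow> real) \<Rightarrow> real \<Rightarrow> 'x \<Rightarrow> real" where
  "nrwe_w nu fX fT t x = cond_dev_gt fT t x * cond_surv fT t x / mean_cond_var nu fX fT"

definition nrwe_bstar :: "'x measure \<Rightarrow> ('x \<Rightarrow> real) \<Rightarrow> ('x \<Rightarrow> real \<Rightarrow> real) \<Rightarrow> real \<Rightarrow> 'x \<Rightarrow> real" where
  "nrwe_bstar nu fX fT t x = fX x * nrwe_w nu fX fT t x"

text \<open>Population OLS of Y on T and X (X :: real^'k contains the constant): normal equations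
  for coefficient b on T and c on X.\<close>
definition ols_normal_eqs ::
  "(real \<times> (real^'k)) measure \<Rightarrow> (real \<times> (real^'k) \<Rightarrow> real) \<Rightarrow> real \<Rightarrow> real^'k \<Rightarrow> bool" where
  "ols_normal_eqs P Y b c \<longleftrightarrow>
     (let r = (\<lambda>z. Y z - b * fst z - inner c (snd z)) in
       integrable P (\<lambda>z. r z * fst z) \<and> (\<integral>z. r z * fst z \<partial>P) = 0 \<and>
       (\<forall>j. integrable P (\<lambda>z. r z * (snd z $ j)) \<and> (\<integral>z. r z * (snd z $ j) \<partial>P) = 0))"

definition ols_defined :: "(real \<times> (real^'k)) measure \<Rightarrow> (real \<times> (real^'k) \<Rightarrow> real) \<Rightarrow> bool" where
  "ols_defined P Y \<longleftrightarrow> (\<exists>!b. \<exists>c. ols_normal_eqs P Y b c)"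

definition ols_coef_T :: "(real \<times> (real^'k)) measure \<Rightarrow> (real \<times> (real^'k) \<Rightarrow> real) \<Rightarrow> real" where
  "ols_coef_T P Y = (THE b. \<exists>c. ols_normal_eqs P Y b c)"

text \<open>Admissible regression functions m(t,x) = E[Y | T=t, X=x] with derivative dm = d/dt m:
  t \<mapsto> m(t,x) differentiable with continuous derivative for each x, and E|dm(T,X)| < \<infinity>.\<close>
definition admissible_dgp ::
  "(real \<times> 'x) measure \<Rightarrow> (real \<Rightarrow> 'x \<Rightarrow> real) \<Rightarrow> (real \<Rightarrow> 'x \<Rightarrow> real) \<Rightarrow> bool" where
  "admissible_dgp P m dm \<longleftrightarrow>
     (\<forall>x t. ((\<lambda>s. m s x) has_real_derivative dm t x) (at t)) \<and>
     (\<forall>x. continuous_on UNIV (\<lambda>t. dm t x)) \<and>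
     integrable P (\<lambda>z. dm (fst z) (snd z))"

end

theory Submission
  imports Defs
begin

(* Weights a that reproduce the OLS coefficient for every admissible regression function are
   pinned down by probe regressions m(t, x) = 1_A(x) (Phi(t) - E[Phi(T) | X = x]), where
   Phi' = phi is continuous and vanishes outside a bounded interval.  Since E[m | X] = 0, the
   probe is orthogonal to every regressor, so by Frisch-Waugh-Lovell its OLS coefficient is
   E[m (T - E[T | X])] / E[Var(T | X)].  Fubini over {u < t} (Yitzhaki's identity) turns this
   covariance into the integral of 1_A(x) phi(t) against the NRWE weights b*, while by assumption
   the coefficient is the integral of 1_A(x) phi(t) against a.  Trapezoids phi converging to the
   indicator of (p, q] and dominated convergence give equal integrals of a and b* over every box
   (p, q] x A; the boxes form an intersection-stable generator of the product sigma-algebra, so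
   a = b* almost everywhere on R x supp f_X. *)

lemma abs_le_one_plus_square: "\<bar>t::real\<bar> \<le> 1 + t\<^sup>2"
proof (cases "\<bar>t\<bar> \<le> 1")
  case False
  then have "\<bar>t\<bar> * 1 \<le> \<bar>t\<bar> * \<bar>t\<bar>" by (intro mult_left_mono) auto
  then show ?thesis by (simp add: power2_eq_square)
qed (use zero_le_power2[of t] in linarith)

lemma borel_measurable_indicator_greaterThan[measurable (raw)]:
  fixes f g :: "'a \<Rightarrow> real"
  assumes [measurable]: "f \<in> borel_measurable M" "g \<in> borel_measurable M"
  shows "(\<lambda>z. indicator {f z<..} (g z) :: real) \<in> borel_measurable M"
  unfolding indicator_def greaterThan_iff by measurable

lemma borel_measurable_vec_nth[measurable (raw)]:
  fixes f :: "'a \<Rightarrow> real^'n"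
  assumes "f \<in> borel_measurable M"
  shows "(\<lambda>z. f z $ j) \<in> borel_measurable M"
  using measurable_compose[OF assms borel_measurable_nth] by simp

lemma integrable_mult_of_square_integrable:
  fixes f g :: "'a \<Rightarrow> real"
  assumes "f \<in> borel_measurable M" "g \<in> borel_measurable M"
    and "integrable M (\<lambda>x. (f x)\<^sup>2)" "integrable M (\<lambda>x. (g x)\<^sup>2)"
  shows "integrable M (\<lambda>x. f x * g x)"
proof (rule Bochner_Integration.integrable_bound[OF Bochner_Integration.integrable_add[OF assms(3,4)]])
  show "AE x in M. norm (f x * g x) \<le> norm ((f x)\<^sup>2 + (g x)\<^sup>2)"
  proof (intro AE_I2)
    fix x
    have "2 * (\<bar>f x\<bar> * \<bar>g x\<bar>) \<le> (f x)\<^sup>2 + (g x)\<^sup>2"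
      using sum_squares_bound[of "\<bar>f x\<bar>" "\<bar>g x\<bar>"] by (simp add: power2_eq_square)
    moreover have "0 \<le> \<bar>f x\<bar> * \<bar>g x\<bar>" by simp
    ultimately have "\<bar>f x * g x\<bar> \<le> (f x)\<^sup>2 + (g x)\<^sup>2"
      unfolding abs_mult by linarith
    then show "norm (f x * g x) \<le> norm ((f x)\<^sup>2 + (g x)\<^sup>2)"
      by simp
  qed
qed (use assms(1,2) in measurable)

lemma (in finite_measure) integrable_bounded_mult:
  fixes f g :: "'a \<Rightarrow> real"
  assumes "f \<in> borel_measurable M" "\<And>x. \<bar>f x\<bar> \<le> c"
    and "g \<in> borel_measurable M" "integrable M (\<lambda>x. (g x)\<^sup>2)"
  shows "integrable M (\<lambda>x. f x * g x)"
proof (rule Bochner_Integration.integrable_bound)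
  show "integrable M (\<lambda>x. c + c * (g x)\<^sup>2)"
    using assms(4) by simp
  show "AE x in M. norm (f x * g x) \<le> norm (c + c * (g x)\<^sup>2)"
  proof (intro AE_I2)
    fix x
    have "0 \<le> c" using assms(2)[of x] by linarith
    have "\<bar>f x\<bar> * \<bar>g x\<bar> \<le> c * (1 + (g x)\<^sup>2)"
      by (intro mult_mono assms(2) abs_le_one_plus_square) (use \<open>0 \<le> c\<close> in auto)
    then show "norm (f x * g x) \<le> norm (c + c * (g x)\<^sup>2)"
      using \<open>0 \<le> c\<close> by (simp add: abs_mult algebra_simps)
  qed
qed (use assms(1,3) in measurable)

lemma integrable_strip_if_bounded:
  fixes f :: "real \<times> 'a \<Rightarrow> real"
  assumes M: "sigma_finite_measure M" and f[measurable]: "f \<in> borel_measurable (lborel \<Otimes>\<^sub>M M)"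
    and c: "integrable M c" and bound: "AE x in M. \<forall>t. \<bar>f (t, x)\<bar> \<le> c x"
  shows "integrable (lborel \<Otimes>\<^sub>M M) (\<lambda>z. indicator {p..q} (fst z) * f z)"
proof (rule integrableI_bounded)
  interpret pair_sigma_finite lborel M
    unfolding pair_sigma_finite_def using M lborel.sigma_finite_measure_axioms by simp
  have "(\<integral>\<^sup>+z. ennreal (norm (indicator {p..q} (fst z) * f z)) \<partial>(lborel \<Otimes>\<^sub>M M))
      = (\<integral>\<^sup>+x. (\<integral>\<^sup>+t. ennreal (indicator {p..q} t * \<bar>f (t, x)\<bar>) \<partial>lborel) \<partial>M)"
    by (subst nn_integral_snd[symmetric]) (auto simp: abs_mult)
  also have "\<dots> \<le> (\<integral>\<^sup>+x. ennreal (c x) * ennreal (q - p) \<partial>M)"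
  proof (rule nn_integral_mono_AE)
    show "AE x in M. (\<integral>\<^sup>+t. ennreal (indicator {p..q} t * \<bar>f (t, x)\<bar>) \<partial>lborel) \<le> ennreal (c x) * ennreal (q - p)"
      using bound
    proof eventually_elim
      case (elim x)
      have "(\<integral>\<^sup>+t. ennreal (indicator {p..q} t * \<bar>f (t, x)\<bar>) \<partial>lborel)
          \<le> (\<integral>\<^sup>+t. ennreal (c x) * indicator {p..q} t \<partial>lborel)"
        using elim by (intro nn_integral_mono) (auto intro!: ennreal_leI split: split_indicator)
      also have "\<dots> = ennreal (c x) * ennreal (q - p)"
        by (cases "p \<le> q") (simp_all add: nn_integral_cmult_indicator ennreal_neg)
      finally show ?case .
    qed
  qed
  also have "\<dots> = (\<integral>\<^sup>+x. ennreal (c x) \<partial>M) * ennreal (q - p)"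
    using c by (simp add: nn_integral_multc)
  also have "\<dots> < \<infinity>"
  proof -
    have "(\<integral>\<^sup>+x. ennreal (c x) \<partial>M) \<le> (\<integral>\<^sup>+x. ennreal (norm (c x)) \<partial>M)"
      by (intro nn_integral_mono) (simp add: ennreal_leI)
    also have "\<dots> < \<infinity>" using c by (simp add: integrable_iff_bounded)
    finally show ?thesis by (simp add: ennreal_mult_less_top)
  qed
  finally show "(\<integral>\<^sup>+z. ennreal (norm (indicator {p..q} (fst z) * f z)) \<partial>(lborel \<Otimes>\<^sub>M M)) < \<infinity>" .
qed measurable

locale bump =
  fixes \<phi> :: "real \<Rightarrow> real" and p q :: real
  assumes phi_continuous: "continuous_on UNIV \<phi>" and abs_phi_le_1: "\<And>u. \<bar>\<phi> u\<bar> \<le> 1"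
    and phi_eq_0_outside: "\<And>u. u \<le> p \<or> q \<le> u \<Longrightarrow> \<phi> u = 0" and p_less_q: "p < q"
begin

lemma phi_measurable[measurable]: "\<phi> \<in> borel_measurable borel"
  by (rule borel_measurable_continuous_onI[OF phi_continuous])

lemma abs_phi_le_indicator: "\<bar>\<phi> u\<bar> \<le> indicator {p..q} u"
  using abs_phi_le_1[of u] phi_eq_0_outside[of u] by (cases "u \<in> {p..q}") (auto simp: indicator_def)

lemma integrable_indicator_support: "integrable lborel (indicator {p..q} :: real \<Rightarrow> real)"
  using p_less_q by (auto simp: integrable_indicator_iff)

lemma phi_integrable: "integrable lborel \<phi>"
  by (rule Bochner_Integration.integrable_bound[OF integrable_indicator_support])
     (auto simp: abs_phi_le_indicator intro!: AE_I2)

definition antideriv :: "real \<Rightarrow> real" where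
  "antideriv t = (\<integral>u. \<phi> u * indicator {..<t} u \<partial>lborel)"

lemma antideriv_eq_integral:
  assumes "a < p"
  shows "antideriv s = integral {a..s} \<phi>"
proof -
  have "antideriv s = (\<integral>u. indicator {a..s} u *\<^sub>R \<phi> u \<partial>lborel)"
    unfolding antideriv_def
  proof (intro integral_cong_AE)
    show "AE u in lborel. \<phi> u * indicator {..<s} u = indicator {a..s} u *\<^sub>R \<phi> u"
      using AE_lborel_singleton[of s]
      by eventually_elim (use phi_eq_0_outside assms in \<open>auto simp: indicator_def\<close>)
  qed measurable
  also have "\<dots> = integral {a..s} \<phi>"
    unfolding set_lebesgue_integral_def[symmetric]
    by (intro set_borel_integral_eq_integral borel_integrable_atLeastAtMost'
        continuous_on_subset[OF phi_continuous]) auto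
  finally show ?thesis .
qed

lemma antideriv_has_derivative: "(antideriv has_real_derivative \<phi> t) (at t)"
proof -
  define a where "a = min p t - 1"
  have "((\<lambda>x. integral {a..x} \<phi>) has_real_derivative \<phi> t) (at t within {a..t+1})"
    by (intro integral_has_real_derivative continuous_on_subset[OF phi_continuous]) (auto simp: a_def)
  moreover have "at t within {a..t+1} = at t"
    by (intro at_within_interior) (auto simp: a_def)
  moreover have "antideriv = (\<lambda>x. integral {a..x} \<phi>)"
    using antideriv_eq_integral[of a] by (auto simp: a_def)
  ultimately show ?thesis by simp
qed

lemma antideriv_measurable[measurable]: "antideriv \<in> borel_measurable borel"
  using antideriv_has_derivative DERIV_isCont continuous_at_imp_continuous_on
  by (blast intro: borel_measurable_continuous_onI)

lemma abs_antideriv_le: "\<bar>antideriv t\<bar> \<le> q - p"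
proof -
  have bound: "norm (\<phi> u * indicator {..<t} u) \<le> (indicator {p..q} u :: real)" for u
    using abs_phi_le_indicator[of u] by (auto split: split_indicator)
  have "\<bar>antideriv t\<bar> \<le> (\<integral>u. norm (\<phi> u * indicator {..<t} u) \<partial>lborel)"
    unfolding antideriv_def using integral_norm_bound by (metis real_norm_def)
  also have "\<dots> \<le> (\<integral>u. indicator {p..q} u \<partial>lborel)"
    using bound by (intro integral_mono integrable_indicator_support
        Bochner_Integration.integrable_bound[OF integrable_indicator_support]) auto
  also have "\<dots> = q - p" using p_less_q by simp
  finally show ?thesis .
qed

lemma integrable_phi_mult_upper_tail:
  assumes w: "integrable lborel w"
  shows "integrable (lborel \<Otimes>\<^sub>M lborel) (\<lambda>(u, t). \<phi> u * (indicator {u<..} t * w t))"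
proof -
  have [measurable]: "w \<in> borel_measurable borel" using borel_measurable_integrable[OF w] by simp
  define F where "F u t = \<phi> u * (indicator {u<..} t * w t)" for u t
  have "integrable (lborel \<Otimes>\<^sub>M lborel) (case_prod F)"
  proof (rule pair_sigma_finite.Fubini_integrable)
    show "pair_sigma_finite lborel lborel"
      by (simp add: pair_sigma_finite_def lborel.sigma_finite_measure_axioms)
    have "(\<integral>t. norm (F u t) \<partial>lborel) \<le> (\<integral>t. \<bar>\<phi> u\<bar> * \<bar>w t\<bar> \<partial>lborel)" for u
      using w by (intro integral_mono Bochner_Integration.integrable_bound[OF integrable_mult_right[OF integrable_abs[OF w]]])
        (auto simp: F_def abs_mult split: split_indicator)
    then show "integrable lborel (\<lambda>u. \<integral>t. norm (case_prod F (u, t)) \<partial>lborel)"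
      by (intro Bochner_Integration.integrable_bound[OF integrable_mult_left[OF integrable_abs[OF phi_integrable], where c="\<integral>t. \<bar>w t\<bar> \<partial>lborel"]])
         (auto intro!: AE_I2 integral_nonneg_AE simp: F_def)
    show "AE u in lborel. integrable lborel (\<lambda>t. case_prod F (u, t))"
      using integrable_mult_indicator[OF _ w] by (auto intro!: AE_I2 simp: F_def)
  qed (unfold F_def case_prod_beta, measurable)
  then show ?thesis
    unfolding F_def[abs_def] .
qed

text \<open>Fubini over \<open>{(u, t). u < t}\<close>. For \<open>w t = (t - \<mu>) f t\<close> this is Yitzhaki's identity:
  the covariance of \<open>antideriv T\<close> with \<open>T\<close> is a weighted integral of \<open>\<phi>\<close>.\<close>
lemma integral_antideriv_mult:
  assumes w: "integrable lborel w"
  shows "(\<integral>t. antideriv t * w t \<partial>lborel) = (\<integral>u. \<phi> u * (\<integral>t. indicator {u<..} t * w t \<partial>lborel) \<partial>lborel)"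
proof -
  have L: "pair_sigma_finite lborel lborel"
    by (simp add: pair_sigma_finite_def lborel.sigma_finite_measure_axioms)
  have "(\<integral>u. \<phi> u * (indicator {u<..} t * w t) \<partial>lborel) = (\<integral>u. (\<phi> u * indicator {..<t} u) * w t \<partial>lborel)" for t
    by (intro Bochner_Integration.integral_cong) (auto split: split_indicator)
  then show ?thesis
    using pair_sigma_finite.Fubini_integral[OF L integrable_phi_mult_upper_tail[OF w]]
    by (simp add: antideriv_def)
qed

end

definition trapezoid :: "real \<Rightarrow> real \<Rightarrow> nat \<Rightarrow> real \<Rightarrow> real" where
  "trapezoid p q n u = max 0 (min 1 (min (real (Suc n) * (u - p)) (1 - real (Suc n) * (u - q))))"

lemma bump_trapezoid:
  assumes "p < q"
  shows "bump (trapezoid p q n) p (q + 1)"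
proof
  show "continuous_on UNIV (trapezoid p q n)"
    unfolding trapezoid_def by (intro continuous_intros)
  fix u
  show "\<bar>trapezoid p q n u\<bar> \<le> 1" unfolding trapezoid_def by auto
  assume u: "u \<le> p \<or> q + 1 \<le> u"
  show "trapezoid p q n u = 0"
  proof (cases "u \<le> p")
    case True
    then have "real (Suc n) * (u - p) \<le> 0" by (intro mult_nonneg_nonpos) auto
    then show ?thesis unfolding trapezoid_def by auto
  next
    case False
    then have "1 * 1 \<le> real (Suc n) * (u - q)" using u by (intro mult_mono) auto
    then show ?thesis unfolding trapezoid_def by auto
  qed
qed (use assms in simp)

lemma trapezoid_tendsto_indicator:
  assumes "p < q"
  shows "(\<lambda>n. trapezoid p q n u) \<longlonglongrightarrow> indicator {p<..q} u"
proof -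
  have steep: "\<forall>\<^sub>F n in sequentially. 1 < real (Suc n) * d" if "0 < d" for d
  proof -
    obtain N :: nat where "1 / d < real N" using reals_Archimedean2 by blast
    then have "1 < real N * d" using \<open>0 < d\<close> by (simp add: field_simps)
    moreover have "real N * d \<le> real (Suc n) * d" if "N \<le> n" for n
      using \<open>0 < d\<close> that by (intro mult_right_mono) auto
    ultimately have "1 < real (Suc n) * d" if "N \<le> n" for n
      using that by (meson less_le_trans)
    then show ?thesis by (auto simp: eventually_sequentially)
  qed
  consider "u \<le> p" | "p < u" "u \<le> q" | "q < u" by linarith
  then have "\<forall>\<^sub>F n in sequentially. trapezoid p q n u = indicator {p<..q} u"
  proof cases
    case 1
    then show ?thesis
      using bump.phi_eq_0_outside[OF bump_trapezoid[OF assms]] by simp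
  next
    case 2
    with steep[of "u - p"] have "\<forall>\<^sub>F n in sequentially. 1 < real (Suc n) * (u - p)" by simp
    then show ?thesis
    proof eventually_elim
      case (elim n)
      have "real (Suc n) * (u - q) \<le> 0" using 2 by (intro mult_nonneg_nonpos) auto
      with elim 2 show ?case by (simp add: trapezoid_def)
    qed
  next
    case 3
    with steep[of "u - q"] have "\<forall>\<^sub>F n in sequentially. 1 < real (Suc n) * (u - q)" by simp
    then show ?thesis
      by eventually_elim (use 3 in \<open>auto simp: trapezoid_def\<close>)
  qed
  then show ?thesis by (rule tendsto_eventually)
qed

lemma tendsto_integral_trapezoid:
  fixes f :: "real \<times> 'a \<Rightarrow> real"
  assumes "p < q" and B[measurable]: "B \<in> sets M"
    and f[measurable]: "f \<in> borel_measurable (lborel \<Otimes>\<^sub>M M)"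
    and strip: "integrable (lborel \<Otimes>\<^sub>M M) (\<lambda>z. indicator {p..q+1} (fst z) * \<bar>f z\<bar>)"
  shows "integrable (lborel \<Otimes>\<^sub>M M) (\<lambda>z. indicator ({p<..q} \<times> B) z * f z)"
    and "(\<lambda>n. \<integral>z. indicator B (snd z) * trapezoid p q n (fst z) * f z \<partial>(lborel \<Otimes>\<^sub>M M))
           \<longlonglongrightarrow> (\<integral>z. indicator ({p<..q} \<times> B) z * f z \<partial>(lborel \<Otimes>\<^sub>M M))"
proof -
  note bump = bump_trapezoid[OF \<open>p < q\<close>]
  have [measurable]: "trapezoid p q n \<in> borel_measurable borel" for n
    using bump.phi_measurable[OF bump] .
  have lim: "AE z in lborel \<Otimes>\<^sub>M M. (\<lambda>n. indicator B (snd z) * trapezoid p q n (fst z) * f z)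
      \<longlonglongrightarrow> indicator ({p<..q} \<times> B) z * f z"
  proof (intro AE_I2)
    fix z :: "real \<times> 'a"
    have "(\<lambda>n. indicator B (snd z) * trapezoid p q n (fst z) * f z)
        \<longlonglongrightarrow> indicator B (snd z) * indicator {p<..q} (fst z) * f z"
      by (intro tendsto_intros trapezoid_tendsto_indicator \<open>p < q\<close>)
    then show "(\<lambda>n. indicator B (snd z) * trapezoid p q n (fst z) * f z)
        \<longlonglongrightarrow> indicator ({p<..q} \<times> B) z * f z"
      by (cases z) (simp add: indicator_times mult_ac)
  qed
  have dom: "AE z in lborel \<Otimes>\<^sub>M M. norm (indicator B (snd z) * trapezoid p q n (fst z) * f z)
      \<le> indicator {p..q+1} (fst z) * \<bar>f z\<bar>" for n
  proof (intro AE_I2)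
    fix z :: "real \<times> 'a"
    have "\<bar>indicator B (snd z) * trapezoid p q n (fst z)\<bar> \<le> indicator {p..q+1} (fst z)"
      using bump.abs_phi_le_indicator[OF bump, where u="fst z"] by (auto simp: indicator_def)
    from mult_right_mono[OF this abs_ge_zero[of "f z"]]
    show "norm (indicator B (snd z) * trapezoid p q n (fst z) * f z) \<le> indicator {p..q+1} (fst z) * \<bar>f z\<bar>"
      by (simp add: abs_mult)
  qed
  show "integrable (lborel \<Otimes>\<^sub>M M) (\<lambda>z. indicator ({p<..q} \<times> B) z * f z)"
    by (rule integrable_dominated_convergence[OF _ _ strip lim dom]) measurable
  show "(\<lambda>n. \<integral>z. indicator B (snd z) * trapezoid p q n (fst z) * f z \<partial>(lborel \<Otimes>\<^sub>M M))
      \<longlonglongrightarrow> (\<integral>z. indicator ({p<..q} \<times> B) z * f z \<partial>(lborel \<Otimes>\<^sub>M M))"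
    by (rule integral_dominated_convergence[OF _ _ strip lim dom]) measurable
qed

lemma emeasure_density_real:
  fixes g :: "'a \<Rightarrow> real"
  assumes "g \<in> borel_measurable M" "X \<in> sets M"
  shows "emeasure (density M (\<lambda>z. ennreal (g z))) X = (\<integral>\<^sup>+z. ennreal (indicator X z * g z) \<partial>M)"
  using assms by (auto simp: emeasure_density intro!: nn_integral_cong split: split_indicator)

lemma emeasure_density_eq_if_set_integral_eq_0:
  fixes g :: "'a \<Rightarrow> real"
  assumes [measurable]: "g \<in> borel_measurable M" "X \<in> sets M"
    and int: "integrable M (\<lambda>z. indicator X z * g z)" and zero: "(\<integral>z. indicator X z * g z \<partial>M) = 0"
  shows "emeasure (density M (\<lambda>z. ennreal (g z))) X = emeasure (density M (\<lambda>z. ennreal (- g z))) X"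
proof -
  let ?pos = "\<integral>\<^sup>+z. ennreal (indicator X z * g z) \<partial>M"
  let ?neg = "\<integral>\<^sup>+z. ennreal (- (indicator X z * g z)) \<partial>M"
  have fin: "?pos < top" "?neg < top"
    using int by (simp_all add: real_integrable_def top.not_eq_extremum)
  have enn2real_eq: "enn2real ?pos = enn2real ?neg"
    using int zero by (simp add: real_lebesgue_integral_def)
  have "?pos = ennreal (enn2real ?pos)"
    using fin(1) by (rule ennreal_enn2real[symmetric])
  also have "\<dots> = ennreal (enn2real ?neg)"
    unfolding enn2real_eq ..
  also have "\<dots> = ?neg"
    using fin(2) by (rule ennreal_enn2real)
  finally show ?thesis
    using emeasure_density_real[of g M X] emeasure_density_real[of "\<lambda>z. - g z" M X] by simp
qed

lemma AE_zero_if_generator_integrals_zero: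
  fixes g :: "'a \<Rightarrow> real"
  assumes M: "sigma_finite_measure M" and g[measurable]: "g \<in> borel_measurable M"
    and gen: "sets M = sigma_sets \<Omega> E" "Int_stable E" "E \<subseteq> Pow \<Omega>"
    and cover: "range (C :: nat \<Rightarrow> 'a set) \<subseteq> E" "(\<Union>i. C i) = \<Omega>"
    and zero: "\<And>X. X \<in> E \<Longrightarrow> integrable M (\<lambda>z. indicator X z * g z) \<and> (\<integral>z. indicator X z * g z \<partial>M) = 0"
  shows "AE z in M. g z = 0"
proof -
  have E_sets: "X \<in> sets M" if "X \<in> E" for X
    unfolding gen(1) using that by (rule sigma_sets.Basic)
  have "density M (\<lambda>z. ennreal (g z)) = density M (\<lambda>z. ennreal (- g z))"
  proof (rule measure_eqI_generator_eq[OF gen(2,3) _ _ _ cover])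
    fix X assume "X \<in> E"
    with zero show "emeasure (density M (\<lambda>z. ennreal (g z))) X = emeasure (density M (\<lambda>z. ennreal (- g z))) X"
      by (intro emeasure_density_eq_if_set_integral_eq_0 g E_sets) auto
  next
    fix i
    have "C i \<in> E" using cover(1) by blast
    with zero have "integrable M (\<lambda>z. indicator (C i) z * g z)" by blast
    then show "emeasure (density M (\<lambda>z. ennreal (g z))) (C i) \<noteq> \<infinity>"
      using emeasure_density_real[OF g E_sets[OF \<open>C i \<in> E\<close>]] by (simp add: real_integrable_def)
  qed (simp_all add: gen(1))
  then have "AE z in M. ennreal (g z) = ennreal (- g z)"
    by (intro sigma_finite_measure.density_unique[OF M]) measurable
  then show ?thesis
  proof eventually_elim
    case (elim z)
    then show ?case
      by (cases "0 \<le> g z") (simp_all add: ennreal_neg ennreal_eq_0_iff)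
  qed
qed

lemma UN_greaterThanAtMost_eq_UNIV: "(\<Union>n::nat. {- real n<..real n}) = UNIV"
proof -
  have "x \<in> (\<Union>n::nat. {- real n<..real n})" for x :: real
  proof -
    obtain n :: nat where "\<bar>x\<bar> < real n" using reals_Archimedean2 by blast
    then have "x \<in> {- real n<..real n}" by auto
    then show ?thesis by blast
  qed
  then show ?thesis by auto
qed

lemma sets_lborel_pair_eq_boxes:
  "sets (lborel \<Otimes>\<^sub>M M) = sigma_sets (UNIV \<times> space M) {{a<..b::real} \<times> B | a b B. B \<in> sets M}"
proof -
  have boxes: "{{a<..b} \<times> B | a b B. B \<in> sets M}
      = {I \<times> B | I B. I \<in> range (\<lambda>(a, b). {a<..b::real}) \<and> B \<in> sets M}"
    by auto
  have "sets (lborel \<Otimes>\<^sub>M M) = sets (sigma UNIV (range (\<lambda>(a, b). {a<..b::real})) \<Otimes>\<^sub>M sigma (space M) (sets M))"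
    by (rule sets_pair_measure_cong) (simp_all add: borel_sigma_sets_Ioc sets_measure_of sets.sets_into_space)
  also have "\<dots> = sets (sigma (UNIV \<times> space M) {{a<..b} \<times> B | a b B. B \<in> sets M})"
    unfolding boxes
  proof (subst sigma_prod)
    show "\<exists>E\<subseteq>range (\<lambda>(a, b). {a<..b::real}). countable E \<and> UNIV = \<Union> E"
    proof (intro exI conjI)
      show "UNIV = \<Union> (range (\<lambda>n::nat. {- real n<..real n}))"
        by (rule UN_greaterThanAtMost_eq_UNIV[symmetric])
    qed auto
  qed (auto intro!: exI[of _ "{space M}"] dest: sets.sets_into_space)
  also have "\<dots> = sigma_sets (UNIV \<times> space M) {{a<..b} \<times> B | a b B. B \<in> sets M}"
    by (rule sets_measure_of) (auto dest: sets.sets_into_space)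
  finally show ?thesis .
qed

lemma AE_zero_if_box_integrals_zero:
  fixes g :: "real \<times> 'a \<Rightarrow> real"
  assumes M: "sigma_finite_measure M" and g: "g \<in> borel_measurable (lborel \<Otimes>\<^sub>M M)"
    and zero: "\<And>a b B. a < b \<Longrightarrow> B \<in> sets M \<Longrightarrow>
       integrable (lborel \<Otimes>\<^sub>M M) (\<lambda>z. indicator ({a<..b} \<times> B) z * g z) \<and>
       (\<integral>z. indicator ({a<..b} \<times> B) z * g z \<partial>(lborel \<Otimes>\<^sub>M M)) = 0"
  shows "AE z in lborel \<Otimes>\<^sub>M M. g z = 0"
proof (rule AE_zero_if_generator_integrals_zero[OF _ g sets_lborel_pair_eq_boxes])
  show "sigma_finite_measure (lborel \<Otimes>\<^sub>M M)"
    by (rule sigma_finite_pair_measure[OF lborel.sigma_finite_measure_axioms M])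
  show "Int_stable {{a<..b::real} \<times> B | a b B. B \<in> sets M}"
  proof (rule Int_stableI)
    fix X Y assume "X \<in> {{a<..b::real} \<times> B | a b B. B \<in> sets M}" "Y \<in> {{a<..b::real} \<times> B | a b B. B \<in> sets M}"
    then obtain a b B c d D where "X = {a<..b} \<times> B" "Y = {c<..d} \<times> D" "B \<in> sets M" "D \<in> sets M"
      by blast
    then have "X \<inter> Y = {max a c<..min b d} \<times> (B \<inter> D)" "B \<inter> D \<in> sets M"
      by auto
    then show "X \<inter> Y \<in> {{a<..b::real} \<times> B | a b B. B \<in> sets M}"
      by blast
  qed
  show "range (\<lambda>n. {- real n<..real n} \<times> space M) \<subseteq> {{a<..b::real} \<times> B | a b B. B \<in> sets M}"
    by auto
  show "(\<Union>n. {- real n<..real n} \<times> space M) = UNIV \<times> space M"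
    using UN_greaterThanAtMost_eq_UNIV by auto
  fix X assume "X \<in> {{a<..b::real} \<times> B | a b B. B \<in> sets M}"
  then obtain a b B where X: "X = {a<..b} \<times> B" and "B \<in> sets M" by blast
  show "integrable (lborel \<Otimes>\<^sub>M M) (\<lambda>z. indicator X z * g z) \<and> (\<integral>z. indicator X z * g z \<partial>(lborel \<Otimes>\<^sub>M M)) = 0"
    using zero[OF _ \<open>B \<in> sets M\<close>, of a b] X by (cases "a < b") auto
qed (auto dest: sets.sets_into_space)

locale nrwe_setting =
  fixes nu :: "(real^'k) measure" and fX :: "real^'k \<Rightarrow> real"
    and fT :: "real^'k \<Rightarrow> real \<Rightarrow> real" and \<gamma> :: "real^'k"
  assumes sigma_finite: "sigma_finite_measure nu" and sets_nu[measurable_cong]: "sets nu = sets borel"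
    and fX_measurable[measurable]: "fX \<in> borel_measurable nu"
    and fX_nonneg: "\<And>x. 0 \<le> fX x"
    and fX_prob: "(\<integral>\<^sup>+x. ennreal (fX x) \<partial>nu) = 1"
    and fT_measurable[measurable]: "(\<lambda>z. fT (snd z) (fst z)) \<in> borel_measurable (lborel \<Otimes>\<^sub>M nu)"
    and fT_nonneg: "\<And>x t. 0 \<le> fT x t"
    and cells: "AE x in nu. x \<in> supp_X fX \<longrightarrow>
           (\<integral>\<^sup>+t. ennreal (fT x t) \<partial>lborel) = 1 \<and>
           integrable lborel (\<lambda>t. t\<^sup>2 * fT x t) \<and> 0 < cond_var fT x \<and> cond_mean fT x = inner \<gamma> x"
    and T_square_integrable: "integrable (joint_law nu fX fT) (\<lambda>z. (fst z)\<^sup>2)"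
    and X_square_integrable: "\<And>j. integrable (joint_law nu fX fT) (\<lambda>z. (snd z $ j)\<^sup>2)"
begin

abbreviation "S \<equiv> supp_X fX"
abbreviation "P \<equiv> joint_law nu fX fT"
abbreviation "V \<equiv> mean_cond_var nu fX fT"

lemma pair_sigma_finite: "pair_sigma_finite lborel nu"
  unfolding pair_sigma_finite_def using sigma_finite lborel.sigma_finite_measure_axioms by simp

lemma sets_P[measurable_cong]: "sets P = sets (lborel \<Otimes>\<^sub>M nu)"
  by (simp add: joint_law_def)

lemma fT_measurable'[measurable (raw)]:
  assumes "f \<in> borel_measurable M" "g \<in> borel_measurable M"
  shows "(\<lambda>z. fT (f z) (g z)) \<in> borel_measurable M"
proof -
  have "(\<lambda>z. (g z, f z)) \<in> measurable M (lborel \<Otimes>\<^sub>M nu)"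
    using assms by (intro measurable_Pair) (auto simp: measurable_cong_sets[OF refl sets_nu])
  from measurable_compose[OF this fT_measurable] show ?thesis by simp
qed

lemma fX_measurable'[measurable (raw)]:
  assumes "f \<in> borel_measurable M"
  shows "(\<lambda>z. fX (f z)) \<in> borel_measurable M"
proof -
  have "f \<in> measurable M nu"
    using assms by (auto simp: measurable_cong_sets[OF refl sets_nu])
  from measurable_compose[OF this fX_measurable] show ?thesis by simp
qed

lemma S_measurable[measurable]: "S \<in> sets nu"
  unfolding supp_X_def by measurable

lemma cond_mean_measurable[measurable]: "cond_mean fT \<in> borel_measurable nu"
  unfolding cond_mean_def by measurable

lemma cond_var_measurable[measurable]: "cond_var fT \<in> borel_measurable nu"
  unfolding cond_var_def by measurable

lemma integral_joint_law:
  assumes g: "integrable P g"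
  shows "integral\<^sup>L P g = (\<integral>x. fX x * (\<integral>t. fT x t * g (t, x) \<partial>lborel) \<partial>nu)"
    and "integrable nu (\<lambda>x. fX x * (\<integral>t. fT x t * g (t, x) \<partial>lborel))"
proof -
  have [measurable]: "g \<in> borel_measurable (lborel \<Otimes>\<^sub>M nu)"
    using borel_measurable_integrable[OF g] by (simp add: measurable_cong_sets[OF sets_P refl])
  have int: "integrable (lborel \<Otimes>\<^sub>M nu) (\<lambda>z. fX (snd z) * fT (snd z) (fst z) * g z)"
    using g unfolding joint_law_def by (subst (asm) integrable_real_density) (auto simp: fX_nonneg fT_nonneg)
  have "integral\<^sup>L P g = (\<integral>z. fX (snd z) * fT (snd z) (fst z) * g z \<partial>(lborel \<Otimes>\<^sub>M nu))"
    unfolding joint_law_def by (subst integral_density) (auto simp: fX_nonneg fT_nonneg)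
  also have "\<dots> = (\<integral>x. (\<integral>t. fX x * fT x t * g (t, x) \<partial>lborel) \<partial>nu)"
    using pair_sigma_finite.integral_snd[OF pair_sigma_finite, of "\<lambda>t x. fX x * fT x t * g (t, x)"] int
    by (simp add: case_prod_beta')
  finally show "integral\<^sup>L P g = (\<integral>x. fX x * (\<integral>t. fT x t * g (t, x) \<partial>lborel) \<partial>nu)"
    by (simp add: mult.assoc)
  show "integrable nu (\<lambda>x. fX x * (\<integral>t. fT x t * g (t, x) \<partial>lborel))"
    using pair_sigma_finite.integrable_snd[OF pair_sigma_finite, of "\<lambda>t x. fX x * fT x t * g (t, x)"] int
    by (simp add: case_prod_beta' mult.assoc)
qed

definition regular :: "real^'k \<Rightarrow> bool" where
  "regular x \<longleftrightarrow> x \<in> S \<and> (\<integral>\<^sup>+t. ennreal (fT x t) \<partial>lborel) = 1 \<and>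
     integrable lborel (\<lambda>t. t\<^sup>2 * fT x t) \<and> 0 < cond_var fT x \<and> cond_mean fT x = inner \<gamma> x"

lemma AE_regular: "AE x in nu. x \<in> S \<longrightarrow> regular x"
  using cells by eventually_elim (auto simp: regular_def)

lemma AE_fX_zero_if_not_regular: "AE x in nu. \<not> regular x \<longrightarrow> fX x = 0"
  using AE_regular by eventually_elim (auto simp: regular_def supp_X_def fX_nonneg less_le)

lemma AE_fX_mult_eq:
  assumes "\<And>x. regular x \<Longrightarrow> f x = g x"
  shows "AE x in nu. fX x * f x = fX x * g x"
  using AE_fX_zero_if_not_regular by eventually_elim (use assms in auto)

lemma integral_joint_law_cells:
  assumes g: "integrable P g" and [measurable]: "c \<in> borel_measurable nu"
    and cell: "\<And>x. regular x \<Longrightarrow> (\<integral>t. fT x t * g (t, x) \<partial>lborel) = c x"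
  shows "integral\<^sup>L P g = (\<integral>x. fX x * c x \<partial>nu)"
    and "integrable nu (\<lambda>x. fX x * c x)"
proof -
  have ae: "AE x in nu. fX x * (\<integral>t. fT x t * g (t, x) \<partial>lborel) = fX x * c x"
    using cell by (rule AE_fX_mult_eq)
  have [measurable]: "(\<lambda>x. fX x * (\<integral>t. fT x t * g (t, x) \<partial>lborel)) \<in> borel_measurable nu"
    using borel_measurable_integrable[OF integral_joint_law(2)[OF g]] .
  show "integral\<^sup>L P g = (\<integral>x. fX x * c x \<partial>nu)"
    unfolding integral_joint_law(1)[OF g] using ae by (intro integral_cong_AE) auto
  show "integrable nu (\<lambda>x. fX x * c x)"
    using integral_joint_law(2)[OF g] ae by (subst integrable_cong_AE[symmetric]) auto
qed

context
  fixes x assumes x: "regular x"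
begin

lemma regular_integrable: "integrable lborel (fT x)"
  and regular_integral: "(\<integral>t. fT x t \<partial>lborel) = 1"
proof -
  have nn: "(\<integral>\<^sup>+t. ennreal (fT x t) \<partial>lborel) = ennreal 1"
    using x by (simp add: regular_def)
  show int: "integrable lborel (fT x)"
    using integrableI_nn_integral_finite[OF _ _ nn] by (auto simp: fT_nonneg)
  show "(\<integral>t. fT x t \<partial>lborel) = 1"
    using nn nn_integral_eq_integral[OF int] by (simp add: fT_nonneg integral_nonneg_AE)
qed

lemma regular_integrable_square: "integrable lborel (\<lambda>t. t\<^sup>2 * fT x t)"
  and regular_cond_var_pos: "0 < cond_var fT x"
  and regular_cond_mean: "cond_mean fT x = inner \<gamma> x"
  using x by (auto simp: regular_def)

lemma regular_integrable_mult: "integrable lborel (\<lambda>t. t * fT x t)"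
proof (rule Bochner_Integration.integrable_bound)
  show "integrable lborel (\<lambda>t. fT x t + t\<^sup>2 * fT x t)"
    using regular_integrable regular_integrable_square by simp
  show "AE t in lborel. norm (t * fT x t) \<le> norm (fT x t + t\<^sup>2 * fT x t)"
  proof (intro AE_I2)
    fix t
    have "\<bar>t\<bar> * fT x t \<le> (1 + t\<^sup>2) * fT x t"
      by (intro mult_right_mono abs_le_one_plus_square fT_nonneg)
    then show "norm (t * fT x t) \<le> norm (fT x t + t\<^sup>2 * fT x t)"
      using fT_nonneg[of x t] by (simp add: abs_mult algebra_simps)
  qed
qed measurable

lemma regular_integrable_dev: "integrable lborel (\<lambda>s. (s - cond_mean fT x) * fT x s)"
  using regular_integrable_mult regular_integrable by (simp add: algebra_simps)

lemma regular_integrable_dev_square: "integrable lborel (\<lambda>s. (s - cond_mean fT x)\<^sup>2 * fT x s)"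
proof -
  have "(\<lambda>s. (s - cond_mean fT x)\<^sup>2 * fT x s) =
     (\<lambda>s. s\<^sup>2 * fT x s - 2 * cond_mean fT x * (s * fT x s) + (cond_mean fT x)\<^sup>2 * fT x s)"
    by (auto simp: fun_eq_iff power2_eq_square algebra_simps)
  then show ?thesis
    using regular_integrable_mult regular_integrable regular_integrable_square by simp
qed

lemma regular_integral_dev: "(\<integral>s. (s - cond_mean fT x) * fT x s \<partial>lborel) = 0"
  using regular_integrable_mult regular_integrable regular_integral
  by (simp add: left_diff_distrib cond_mean_def)

end

sublocale P: finite_measure P
proof (rule finite_measureI)
  have "emeasure P (space P) = (\<integral>\<^sup>+z. ennreal (fX (snd z) * fT (snd z) (fst z)) \<partial>(lborel \<Otimes>\<^sub>M nu))"
    unfolding joint_law_def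
    by (subst emeasure_density) (auto simp: space_pair_measure intro!: nn_integral_cong)
  also have "\<dots> = (\<integral>\<^sup>+x. (\<integral>\<^sup>+t. ennreal (fX x) * ennreal (fT x t) \<partial>lborel) \<partial>nu)"
    by (subst pair_sigma_finite.nn_integral_snd[OF pair_sigma_finite, symmetric])
       (auto simp: ennreal_mult fX_nonneg fT_nonneg)
  also have "\<dots> = (\<integral>\<^sup>+x. ennreal (fX x) \<partial>nu)"
  proof (intro nn_integral_cong_AE)
    show "AE x in nu. (\<integral>\<^sup>+t. ennreal (fX x) * ennreal (fT x t) \<partial>lborel) = ennreal (fX x)"
      using AE_fX_zero_if_not_regular
      by eventually_elim (auto simp: nn_integral_cmult regular_def)
  qed
  finally show "emeasure P (space P) \<noteq> \<infinity>" using fX_prob by simp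
qed

lemma integrable_T_mult_T: "integrable P (\<lambda>z. fst z * fst z)"
  by (rule integrable_mult_of_square_integrable[OF _ _ T_square_integrable T_square_integrable]) measurable

lemma integrable_X_mult_T: "integrable P (\<lambda>z. snd z $ j * fst z)"
  by (rule integrable_mult_of_square_integrable[OF _ _ X_square_integrable T_square_integrable]) measurable

lemma integrable_X_mult_X: "integrable P (\<lambda>z. snd z $ i * snd z $ j)"
  by (rule integrable_mult_of_square_integrable[OF _ _ X_square_integrable X_square_integrable]) measurable

text \<open>\<open>T - E[T | X]\<close>, by linearity of the conditional mean.\<close>
definition resid :: "real \<times> (real^'k) \<Rightarrow> real" where
  "resid z = fst z - inner \<gamma> (snd z)"

lemma resid_measurable[measurable]: "resid \<in> borel_measurable (lborel \<Otimes>\<^sub>M nu)"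
  unfolding resid_def by measurable

lemma mult_resid_eq: "f * resid z = f * fst z - (\<Sum>i\<in>UNIV. \<gamma> $ i * (f * snd z $ i))"
  unfolding resid_def inner_vec_def by (simp add: algebra_simps sum_distrib_left)

lemma
  assumes "integrable P (\<lambda>z. f z * fst z)" "\<And>i. integrable P (\<lambda>z. f z * snd z $ i)"
  shows integrable_mult_resid: "integrable P (\<lambda>z. f z * resid z)"
    and integral_mult_resid: "integral\<^sup>L P (\<lambda>z. f z * resid z)
      = integral\<^sup>L P (\<lambda>z. f z * fst z) - (\<Sum>i\<in>UNIV. \<gamma> $ i * integral\<^sup>L P (\<lambda>z. f z * snd z $ i))"
  unfolding mult_resid_eq using assms by (auto simp: integral_sum)

lemma integrable_X_mult_resid: "integrable P (\<lambda>z. snd z $ j * resid z)"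
  by (rule integrable_mult_resid) (use integrable_X_mult_T integrable_X_mult_X in auto)

lemma integrable_T_mult_resid: "integrable P (\<lambda>z. fst z * resid z)"
  by (rule integrable_mult_resid) (use integrable_T_mult_T integrable_X_mult_T in \<open>auto simp: mult.commute\<close>)

lemma regular_resid: "regular x \<Longrightarrow> resid (t, x) = t - cond_mean fT x"
  by (simp add: resid_def regular_cond_mean)

lemma integral_X_mult_resid: "integral\<^sup>L P (\<lambda>z. snd z $ j * resid z) = 0"
proof -
  have "(\<integral>t. fT x t * (x $ j * resid (t, x)) \<partial>lborel) = 0" if "regular x" for x
    using regular_integral_dev[OF that]
    by (simp add: regular_resid[OF that] mult_ac)
  then show ?thesis
    using integral_joint_law_cells(1)[OF integrable_X_mult_resid, of "\<lambda>_. 0"] by simp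
qed

lemma
  shows integral_T_mult_resid: "integral\<^sup>L P (\<lambda>z. fst z * resid z) = V"
    and integrable_fX_mult_cond_var: "integrable nu (\<lambda>x. fX x * cond_var fT x)"
proof -
  have cell: "(\<integral>t. fT x t * (t * resid (t, x)) \<partial>lborel) = cond_var fT x" if x: "regular x" for x
  proof -
    have "t * (t - cond_mean fT x) * fT x t
        = (t - cond_mean fT x)\<^sup>2 * fT x t + cond_mean fT x * ((t - cond_mean fT x) * fT x t)" for t
      by (simp add: power2_eq_square algebra_simps)
    then show ?thesis
      using regular_integrable_dev_square[OF x] regular_integrable_dev[OF x] regular_integral_dev[OF x]
      by (simp add: regular_resid[OF x] cond_var_def mult_ac)
  qed
  have "integral\<^sup>L P (\<lambda>z. fst z * resid z) = (\<integral>x. fX x * cond_var fT x \<partial>nu)"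
    by (rule integral_joint_law_cells(1)[OF integrable_T_mult_resid cond_var_measurable]) (simp add: cell)
  then show "integral\<^sup>L P (\<lambda>z. fst z * resid z) = V"
    by (simp add: mean_cond_var_def)
  show "integrable nu (\<lambda>x. fX x * cond_var fT x)"
    by (rule integral_joint_law_cells(2)[OF integrable_T_mult_resid cond_var_measurable]) (simp add: cell)
qed

lemma V_pos: "0 < V"
proof -
  have nonneg: "AE x in nu. 0 \<le> fX x * cond_var fT x"
    using AE_fX_zero_if_not_regular
    by eventually_elim (use regular_cond_var_pos fX_nonneg in \<open>auto simp: less_imp_le\<close>)
  have "V \<noteq> 0"
  proof
    assume "V = 0"
    then have "AE x in nu. fX x * cond_var fT x = 0"
      using integral_nonneg_eq_0_iff_AE[OF integrable_fX_mult_cond_var nonneg]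
      by (simp add: mean_cond_var_def)
    then have "AE x in nu. fX x = 0"
      using AE_regular
    proof eventually_elim
      case (elim x)
      show ?case
      proof (rule ccontr)
        assume "fX x \<noteq> 0"
        then have "regular x" using elim fX_nonneg[of x] by (simp add: supp_X_def)
        then show False using elim regular_cond_var_pos[of x] \<open>fX x \<noteq> 0\<close> by simp
      qed
    qed
    then have "(\<integral>\<^sup>+x. ennreal (fX x) \<partial>nu) = 0"
      by (subst nn_integral_0_iff_AE) (auto elim!: eventually_mono)
    then show False using fX_prob by simp
  qed
  moreover have "0 \<le> V"
    unfolding mean_cond_var_def using nonneg by (rule integral_nonneg_AE)
  ultimately show ?thesis by simp
qed

text \<open>Frisch--Waugh--Lovell: the OLS coefficient on \<open>T\<close> is \<open>E[Y resid] / E[T resid]\<close>.\<close>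
lemma ols_normal_eqs_imp_coef:
  assumes "ols_normal_eqs P Y b c"
  shows "V * b = integral\<^sup>L P (\<lambda>z. Y z * resid z)"
proof -
  define r where "r z = Y z - b * fst z - inner c (snd z)" for z
  have rT: "integrable P (\<lambda>z. r z * fst z)" "integral\<^sup>L P (\<lambda>z. r z * fst z) = 0"
    and rX: "\<And>j. integrable P (\<lambda>z. r z * snd z $ j)" "\<And>j. integral\<^sup>L P (\<lambda>z. r z * snd z $ j) = 0"
    using assms unfolding ols_normal_eqs_def r_def Let_def by auto
  have Y_eq: "Y z * resid z = r z * resid z + b * (fst z * resid z) + (\<Sum>i\<in>UNIV. c $ i * (snd z $ i * resid z))" for z
    unfolding r_def inner_vec_def by (simp add: algebra_simps sum_distrib_left sum_distrib_right)
  have "integral\<^sup>L P (\<lambda>z. r z * resid z) = 0"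
    using integral_mult_resid[OF rT(1) rX(1)] rT(2) rX(2) by simp
  then show ?thesis
    unfolding Y_eq
    using integrable_mult_resid[OF rT(1) rX(1)] integrable_T_mult_resid integrable_X_mult_resid
    by (simp add: integral_sum integral_T_mult_resid integral_X_mult_resid)
qed

lemma ols_coef_T_eqI:
  assumes YT: "integrable P (\<lambda>z. Y z * fst z)" and YX: "\<And>j. integrable P (\<lambda>z. Y z * snd z $ j)"
    and orth: "\<And>j. integral\<^sup>L P (\<lambda>z. Y z * snd z $ j) = 0"
    and cov: "integral\<^sup>L P (\<lambda>z. Y z * fst z) = V * B"
  shows "ols_defined P Y" and "ols_coef_T P Y = B"
proof -
  have YD: "integral\<^sup>L P (\<lambda>z. Y z * resid z) = V * B"
    using integral_mult_resid[OF YT YX] orth cov by simp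
  have uniq: "b = B" if "ols_normal_eqs P Y b c" for b c
    using ols_normal_eqs_imp_coef[OF that] YD V_pos by simp
  have "ols_normal_eqs P Y B (- B *\<^sub>R \<gamma>)"
  proof -
    have r: "Y z - B * fst z - inner (- B *\<^sub>R \<gamma>) (snd z) = Y z - B * resid z" for z
      by (simp add: resid_def algebra_simps)
    have "(Y z - B * resid z) * f = Y z * f - B * (f * resid z)" for z f
      by (simp add: algebra_simps)
    then show ?thesis
      unfolding ols_normal_eqs_def Let_def r
      using YT YX integrable_T_mult_resid integrable_X_mult_resid orth cov
      by (simp add: integral_T_mult_resid integral_X_mult_resid)
  qed
  with uniq show "ols_defined P Y" "ols_coef_T P Y = B"
    unfolding ols_defined_def ols_coef_T_def by blast+
qed

abbreviation bstar :: "real \<times> (real^'k) \<Rightarrow> real" where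
  "bstar z \<equiv> nrwe_bstar nu fX fT (fst z) (snd z)"

lemma bstar_measurable[measurable]: "bstar \<in> borel_measurable (lborel \<Otimes>\<^sub>M nu)"
  unfolding nrwe_bstar_def nrwe_w_def cond_dev_gt_def cond_surv_def set_lebesgue_integral_def
  by measurable

lemma nrwe_bstar_outside: "x \<notin> S \<Longrightarrow> nrwe_bstar nu fX fT t x = 0"
  using fX_nonneg[of x] by (simp add: supp_X_def nrwe_bstar_def)

text \<open>\<open>E[T - \<mu>(x) | T > u, X = x] P(T > u | X = x)\<close>, without the division that is undefined
  when \<open>P(T > u | X = x) = 0\<close>.\<close>
definition tail_dev :: "real \<Rightarrow> real^'k \<Rightarrow> real" where
  "tail_dev u x = (LINT s:{u<..}|lborel. (s - cond_mean fT x) * fT x s)"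

context
  fixes x assumes x: "regular x"
begin

lemma tail_dev_eq_0_if_cond_surv_eq_0:
  assumes "cond_surv fT u x = 0"
  shows "tail_dev u x = 0"
proof -
  have "integrable lborel (\<lambda>s. indicator {u<..} s * fT x s)"
    using integrable_mult_indicator[OF _ regular_integrable[OF x], of "{u<..}"] by simp
  moreover have "(\<integral>s. indicator {u<..} s * fT x s \<partial>lborel) = 0"
    using assms by (simp add: cond_surv_def set_lebesgue_integral_def)
  ultimately have "AE s in lborel. indicator {u<..} s * fT x s = 0"
    by (subst (asm) integral_nonneg_eq_0_iff_AE) (auto simp: fT_nonneg)
  then have "AE s in lborel. indicator {u<..} s *\<^sub>R ((s - cond_mean fT x) * fT x s) = 0"
    by eventually_elim (auto simp: indicator_def)
  then show ?thesis
    unfolding tail_dev_def set_lebesgue_integral_def by (rule integral_eq_zero_AE)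
qed

lemma regular_nrwe_bstar: "nrwe_bstar nu fX fT t x = fX x * tail_dev t x / V"
  using tail_dev_eq_0_if_cond_surv_eq_0[of t]
  by (cases "cond_surv fT t x = 0") (simp_all add: nrwe_bstar_def nrwe_w_def cond_dev_gt_def tail_dev_def)

lemma abs_tail_dev_le: "\<bar>tail_dev u x\<bar> \<le> 1 + cond_var fT x"
proof -
  let ?d = "\<lambda>s. s - cond_mean fT x"
  have int: "integrable lborel (\<lambda>s. fT x s + (?d s)\<^sup>2 * fT x s)"
    using regular_integrable[OF x] regular_integrable_dev_square[OF x] by simp
  have "\<bar>tail_dev u x\<bar> \<le> (\<integral>s. norm (indicator {u<..} s *\<^sub>R (?d s * fT x s)) \<partial>lborel)"
    unfolding tail_dev_def set_lebesgue_integral_def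
    using integral_norm_bound[of lborel "\<lambda>s. indicator {u<..} s *\<^sub>R (?d s * fT x s)"] by simp
  also have "\<dots> \<le> (\<integral>s. fT x s + (?d s)\<^sup>2 * fT x s \<partial>lborel)"
  proof (rule integral_mono[OF _ int])
    have bound: "norm (indicator {u<..} s *\<^sub>R (?d s * fT x s)) \<le> fT x s + (?d s)\<^sup>2 * fT x s" for s
    proof -
      have "norm (indicator {u<..} s *\<^sub>R (?d s * fT x s)) \<le> \<bar>?d s\<bar> * fT x s"
        using fT_nonneg[of x s] by (auto simp: abs_mult split: split_indicator)
      also have "\<dots> \<le> (1 + (?d s)\<^sup>2) * fT x s"
        by (intro mult_right_mono abs_le_one_plus_square fT_nonneg)
      finally show ?thesis by (simp add: algebra_simps)
    qed
    then show "integrable lborel (\<lambda>s. norm (indicator {u<..} s *\<^sub>R (?d s * fT x s)))"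
      by (intro Bochner_Integration.integrable_bound[OF int]) (auto intro!: AE_I2 order_trans[OF _ abs_ge_self])
    show "norm (indicator {u<..} s *\<^sub>R (?d s * fT x s)) \<le> fT x s + (?d s)\<^sup>2 * fT x s" for s
      by (rule bound)
  qed
  also have "\<dots> = 1 + cond_var fT x"
    using regular_integrable[OF x] regular_integrable_dev_square[OF x] regular_integral[OF x]
    by (simp add: cond_var_def)
  finally show ?thesis .
qed

end

lemma AE_abs_nrwe_bstar_le: "AE x in nu. \<forall>t. \<bar>nrwe_bstar nu fX fT t x\<bar> \<le> fX x * (1 + cond_var fT x) / V"
  using AE_fX_zero_if_not_regular
proof eventually_elim
  case (elim x)
  show ?case
  proof (cases "regular x")
    case True
    then show ?thesis
      using abs_tail_dev_le[OF True] V_pos fX_nonneg[of x]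
      by (auto simp: regular_nrwe_bstar abs_mult intro!: divide_right_mono mult_left_mono)
  qed (use elim in \<open>simp add: nrwe_bstar_def\<close>)
qed

lemma integrable_abs_bstar_strip: "integrable (lborel \<Otimes>\<^sub>M nu) (\<lambda>z. indicator {p..q} (fst z) * \<bar>bstar z\<bar>)"
proof (rule integrable_strip_if_bounded[OF sigma_finite])
  show "integrable nu (\<lambda>x. fX x * (1 + cond_var fT x) / V)"
    using integrableI_nn_integral_finite[of fX nu 1] fX_prob integrable_fX_mult_cond_var
    by (simp add: fX_nonneg distrib_left)
  show "AE x in nu. \<forall>t. \<bar>\<bar>bstar (t, x)\<bar>\<bar> \<le> fX x * (1 + cond_var fT x) / V"
    using AE_abs_nrwe_bstar_le by simp
qed measurable

definition ols_weights :: "(real \<Rightarrow> real^'k \<Rightarrow> real) \<Rightarrow> bool" where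
  "ols_weights a \<longleftrightarrow> (\<forall>m dm. admissible_dgp P m dm \<longrightarrow> ols_defined P (\<lambda>z. m (fst z) (snd z)) \<longrightarrow>
     set_integrable (lborel \<Otimes>\<^sub>M nu) (UNIV \<times> S) (\<lambda>z. dm (fst z) (snd z) * a (fst z) (snd z)) \<longrightarrow>
     ols_coef_T P (\<lambda>z. m (fst z) (snd z)) =
       (LINT z:(UNIV \<times> S)|(lborel \<Otimes>\<^sub>M nu). dm (fst z) (snd z) * a (fst z) (snd z)))"

end

locale nrwe_probe = nrwe_setting nu fX fT \<gamma> + bump \<phi> p q
  for nu :: "(real^'k) measure" and fX fT \<gamma> \<phi> p q +
  fixes A :: "(real^'k) set"
  assumes A_sets[measurable]: "A \<in> sets nu"
begin

text \<open>On regular cells \<open>K x = E[antideriv T | X = x]\<close>; the clamp only makes \<open>K\<close> bounded everywhere.\<close>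
definition K :: "real^'k \<Rightarrow> real" where
  "K x = max (p - q) (min (q - p) (\<integral>s. antideriv s * fT x s \<partial>lborel))"

definition probe :: "real \<Rightarrow> real^'k \<Rightarrow> real" where
  "probe t x = indicator A x * (antideriv t - K x)"

definition probe_deriv :: "real \<Rightarrow> real^'k \<Rightarrow> real" where
  "probe_deriv t x = indicator A x * \<phi> t"

definition probe_cov :: "real^'k \<Rightarrow> real" where
  "probe_cov x = indicator A x * (\<integral>u. \<phi> u * tail_dev u x \<partial>lborel)"

lemma K_measurable[measurable]: "K \<in> borel_measurable nu"
  unfolding K_def by measurable

lemma probe_measurable[measurable]: "(\<lambda>z. probe (fst z) (snd z)) \<in> borel_measurable (lborel \<Otimes>\<^sub>M nu)"
  unfolding probe_def by measurable

lemma probe_deriv_measurable[measurable]: "(\<lambda>z. probe_deriv (fst z) (snd z)) \<in> borel_measurable (lborel \<Otimes>\<^sub>M nu)"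
  unfolding probe_deriv_def by measurable

lemma probe_cov_measurable[measurable]: "probe_cov \<in> borel_measurable nu"
  unfolding probe_cov_def tail_dev_def set_lebesgue_integral_def by measurable

lemma abs_K_le: "\<bar>K x\<bar> \<le> q - p"
  using p_less_q by (auto simp: K_def abs_le_iff max_def min_def)

lemma abs_probe_le: "\<bar>probe t x\<bar> \<le> 2 * (q - p)"
proof -
  have "\<bar>antideriv t - K x\<bar> \<le> \<bar>antideriv t\<bar> + \<bar>K x\<bar>"
    by (rule abs_triangle_ineq4)
  also have "\<dots> \<le> (q - p) + (q - p)"
    by (intro add_mono abs_antideriv_le abs_K_le)
  finally show ?thesis using p_less_q by (simp add: probe_def abs_mult indicator_def)
qed

lemma abs_probe_deriv_le: "\<bar>probe_deriv t x\<bar> \<le> indicator {p..q} t"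
  using abs_phi_le_indicator[of t] by (auto simp: probe_deriv_def abs_mult indicator_def)

lemma admissible_probe: "admissible_dgp P probe probe_deriv"
  unfolding admissible_dgp_def
proof (intro conjI allI)
  fix x t
  show "((\<lambda>s. probe s x) has_real_derivative probe_deriv t x) (at t)"
    unfolding probe_def probe_deriv_def
    using DERIV_cmult[OF DERIV_diff[OF antideriv_has_derivative[of t] DERIV_const[where k="K x"]],
        where c="indicator A x"]
    by simp
next
  fix x
  show "continuous_on UNIV (\<lambda>t. probe_deriv t x)"
    unfolding probe_deriv_def by (intro continuous_intros phi_continuous)
next
  show "integrable P (\<lambda>z. probe_deriv (fst z) (snd z))"
    by (rule Bochner_Integration.integrable_bound[OF P.integrable_const[of "1::real"]])
       (use abs_phi_le_1 in \<open>auto intro!: AE_I2 simp: probe_deriv_def abs_mult indicator_def\<close>)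
qed

context
  fixes x assumes x: "regular x"
begin

lemma regular_integrable_antideriv: "integrable lborel (\<lambda>s. antideriv s * fT x s)"
  by (rule Bochner_Integration.integrable_bound[OF integrable_mult_right[OF regular_integrable[OF x], of "q - p"]])
     (use abs_antideriv_le fT_nonneg p_less_q in \<open>auto intro!: AE_I2 mult_right_mono simp: abs_mult\<close>)

lemma regular_integrable_antideriv_mult: "integrable lborel (\<lambda>s. antideriv s * (s * fT x s))"
  by (rule Bochner_Integration.integrable_bound[OF integrable_mult_right[OF integrable_abs[OF regular_integrable_mult[OF x]], of "q - p"]])
     (use abs_antideriv_le p_less_q in \<open>auto intro!: AE_I2 mult_right_mono simp: abs_mult\<close>)

lemma regular_K: "K x = (\<integral>s. antideriv s * fT x s \<partial>lborel)"
proof -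
  have "\<bar>\<integral>s. antideriv s * fT x s \<partial>lborel\<bar> \<le> (\<integral>s. \<bar>antideriv s * fT x s\<bar> \<partial>lborel)"
    using integral_norm_bound[of lborel "\<lambda>s. antideriv s * fT x s"] by simp
  also have "\<dots> \<le> (\<integral>s. (q - p) * fT x s \<partial>lborel)"
  proof (rule integral_mono[OF integrable_abs[OF regular_integrable_antideriv]
        integrable_mult_right[OF regular_integrable[OF x]]])
    fix s
    show "\<bar>antideriv s * fT x s\<bar> \<le> (q - p) * fT x s"
      using abs_antideriv_le[of s] fT_nonneg[of x s] by (simp add: abs_mult mult_right_mono)
  qed
  also have "\<dots> = q - p" using regular_integral[OF x] by simp
  finally show ?thesis unfolding K_def by (simp add: abs_le_iff)
qed

lemma regular_cond_probe_mult_X: "(\<integral>t. fT x t * (probe t x * x $ j) \<partial>lborel) = 0"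
proof -
  have "(\<integral>t. fT x t * (probe t x * x $ j) \<partial>lborel)
      = (\<integral>t. (indicator A x * x $ j) * (antideriv t * fT x t - K x * fT x t) \<partial>lborel)"
    by (intro Bochner_Integration.integral_cong) (simp_all add: probe_def algebra_simps)
  also have "\<dots> = 0"
    using regular_integrable_antideriv regular_integrable[OF x] regular_integral[OF x] regular_K
    by simp
  finally show ?thesis .
qed

lemma regular_cond_probe_mult_T: "(\<integral>t. fT x t * (probe t x * t) \<partial>lborel) = probe_cov x"
proof -
  let ?\<mu> = "cond_mean fT x"
  have "fT x t * (probe t x * t) = indicator A x *
      (antideriv t * ((t - ?\<mu>) * fT x t) + ?\<mu> * (antideriv t * fT x t) - K x * (t * fT x t))" for t
    by (simp add: probe_def algebra_simps)
  moreover have "(\<integral>t. antideriv t * ((t - ?\<mu>) * fT x t) \<partial>lborel) = (\<integral>u. \<phi> u * tail_dev u x \<partial>lborel)"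
    unfolding integral_antideriv_mult[OF regular_integrable_dev[OF x]] tail_dev_def set_lebesgue_integral_def
    by simp
  moreover have "integrable lborel (\<lambda>t. antideriv t * ((t - ?\<mu>) * fT x t))"
    using regular_integrable_antideriv_mult regular_integrable_antideriv
    by (simp add: algebra_simps)
  ultimately show ?thesis
    using regular_integrable_antideriv regular_integrable_mult[OF x] regular_K
    by (simp add: probe_cov_def cond_mean_def)
qed

end

lemma integrable_probe_mult_T: "integrable P (\<lambda>z. probe (fst z) (snd z) * fst z)"
  by (rule P.integrable_bounded_mult[OF _ abs_probe_le _ T_square_integrable]) measurable

lemma integrable_probe_mult_X: "integrable P (\<lambda>z. probe (fst z) (snd z) * snd z $ j)"
  by (rule P.integrable_bounded_mult[OF _ abs_probe_le _ X_square_integrable]) measurable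

lemma integral_probe_mult_X: "integral\<^sup>L P (\<lambda>z. probe (fst z) (snd z) * snd z $ j) = 0"
  using integral_joint_law_cells(1)[OF integrable_probe_mult_X, of "\<lambda>_. 0"]
  by (simp add: regular_cond_probe_mult_X)

lemma integral_probe_mult_T: "integral\<^sup>L P (\<lambda>z. probe (fst z) (snd z) * fst z) = (\<integral>x. fX x * probe_cov x \<partial>nu)"
  by (rule integral_joint_law_cells(1)[OF integrable_probe_mult_T probe_cov_measurable])
     (simp add: regular_cond_probe_mult_T)

lemma integral_probe_deriv_bstar:
  "V * (\<integral>z. probe_deriv (fst z) (snd z) * bstar z \<partial>(lborel \<Otimes>\<^sub>M nu)) = (\<integral>x. fX x * probe_cov x \<partial>nu)"
proof -
  have int: "integrable (lborel \<Otimes>\<^sub>M nu) (\<lambda>z. probe_deriv (fst z) (snd z) * bstar z)"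
    by (rule Bochner_Integration.integrable_bound[OF integrable_abs_bstar_strip[of p q]])
       (use abs_probe_deriv_le in \<open>auto intro!: AE_I2 mult_right_mono simp: abs_mult\<close>)
  then have int': "integrable (lborel \<Otimes>\<^sub>M nu) (\<lambda>(t, x). probe_deriv t x * nrwe_bstar nu fX fT t x)"
    by (simp add: case_prod_beta')
  have "(\<integral>z. probe_deriv (fst z) (snd z) * bstar z \<partial>(lborel \<Otimes>\<^sub>M nu))
      = (\<integral>x. (\<integral>t. probe_deriv t x * nrwe_bstar nu fX fT t x \<partial>lborel) \<partial>nu)"
    using pair_sigma_finite.integral_snd[OF pair_sigma_finite int'] by (simp add: case_prod_beta')
  also have "\<dots> = (\<integral>x. fX x * probe_cov x / V \<partial>nu)"
  proof (intro integral_cong_AE)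
    show "AE x in nu. (\<integral>t. probe_deriv t x * nrwe_bstar nu fX fT t x \<partial>lborel) = fX x * probe_cov x / V"
      using AE_fX_zero_if_not_regular
    proof eventually_elim
      case (elim x)
      show ?case
      proof (cases "regular x")
        case True
        have "(\<integral>t. probe_deriv t x * nrwe_bstar nu fX fT t x \<partial>lborel)
            = (\<integral>t. (indicator A x * fX x / V) * (\<phi> t * tail_dev t x) \<partial>lborel)"
          by (intro Bochner_Integration.integral_cong)
             (simp_all add: regular_nrwe_bstar[OF True] probe_deriv_def ac_simps)
        then show ?thesis
          by (simp add: probe_cov_def)
      qed (use elim in \<open>simp add: nrwe_bstar_def\<close>)
    qed
  qed (use borel_measurable_integrable[OF pair_sigma_finite.integrable_snd[OF pair_sigma_finite int']]
       in simp_all)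
  finally show ?thesis using V_pos by simp
qed

lemma
  shows ols_defined_probe: "ols_defined P (\<lambda>z. probe (fst z) (snd z))"
    and ols_coef_T_probe: "ols_coef_T P (\<lambda>z. probe (fst z) (snd z))
      = (\<integral>z. probe_deriv (fst z) (snd z) * bstar z \<partial>(lborel \<Otimes>\<^sub>M nu))"
proof -
  have "integral\<^sup>L P (\<lambda>z. probe (fst z) (snd z) * fst z)
      = V * (\<integral>z. probe_deriv (fst z) (snd z) * bstar z \<partial>(lborel \<Otimes>\<^sub>M nu))"
    by (simp add: integral_probe_mult_T integral_probe_deriv_bstar)
  note ols = ols_coef_T_eqI[OF integrable_probe_mult_T integrable_probe_mult_X integral_probe_mult_X this]
  from ols(1) show "ols_defined P (\<lambda>z. probe (fst z) (snd z))" .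
  from ols(2) show "ols_coef_T P (\<lambda>z. probe (fst z) (snd z))
      = (\<integral>z. probe_deriv (fst z) (snd z) * bstar z \<partial>(lborel \<Otimes>\<^sub>M nu))" .
qed

lemma integral_probe_deriv_weights:
  assumes weights: "ols_weights a"
    and a: "set_integrable (lborel \<Otimes>\<^sub>M nu) (UNIV \<times> S) (\<lambda>z. a (fst z) (snd z))"
  shows "(LINT z:(UNIV \<times> S)|(lborel \<Otimes>\<^sub>M nu). indicator A (snd z) * \<phi> (fst z) * a (fst z) (snd z))
       = (\<integral>z. indicator A (snd z) * \<phi> (fst z) * bstar z \<partial>(lborel \<Otimes>\<^sub>M nu))"
proof -
  let ?aS = "\<lambda>z. indicator (UNIV \<times> S) z *\<^sub>R a (fst z) (snd z)"
  have aS: "integrable (lborel \<Otimes>\<^sub>M nu) ?aS"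
    using a by (simp add: set_integrable_def)
  have "integrable (lborel \<Otimes>\<^sub>M nu) (\<lambda>z. probe_deriv (fst z) (snd z) * ?aS z)"
  proof (rule Bochner_Integration.integrable_bound[OF integrable_norm[OF aS]])
    show "(\<lambda>z. probe_deriv (fst z) (snd z) * ?aS z) \<in> borel_measurable (lborel \<Otimes>\<^sub>M nu)"
      using borel_measurable_integrable[OF aS] by measurable
    show "AE z in lborel \<Otimes>\<^sub>M nu. norm (probe_deriv (fst z) (snd z) * ?aS z) \<le> norm (norm (?aS z))"
      using abs_phi_le_1 by (auto intro!: AE_I2 mult_left_le_one_le simp: probe_deriv_def abs_mult indicator_def)
  qed
  then have "set_integrable (lborel \<Otimes>\<^sub>M nu) (UNIV \<times> S) (\<lambda>z. probe_deriv (fst z) (snd z) * a (fst z) (snd z))"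
    by (simp add: set_integrable_def mult.left_commute)
  with weights have "ols_coef_T P (\<lambda>z. probe (fst z) (snd z))
      = (LINT z:(UNIV \<times> S)|(lborel \<Otimes>\<^sub>M nu). probe_deriv (fst z) (snd z) * a (fst z) (snd z))"
    unfolding ols_weights_def using admissible_probe ols_defined_probe by blast
  then show ?thesis
    using ols_coef_T_probe by (simp add: probe_deriv_def)
qed

end

context nrwe_setting
begin

lemma integral_trapezoid_weights_eq_bstar:
  assumes weights: "ols_weights a"
    and a: "set_integrable (lborel \<Otimes>\<^sub>M nu) (UNIV \<times> S) (\<lambda>z. a (fst z) (snd z))"
    and "p < q" and "B \<in> sets nu"
  shows "(\<integral>z. indicator B (snd z) * trapezoid p q n (fst z) * (indicator (UNIV \<times> S) z * a (fst z) (snd z)) \<partial>(lborel \<Otimes>\<^sub>M nu))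
      = (\<integral>z. indicator B (snd z) * trapezoid p q n (fst z) * bstar z \<partial>(lborel \<Otimes>\<^sub>M nu))"
proof -
  have "nrwe_probe nu fX fT \<gamma> (trapezoid p q n) p (q + 1) B"
    using nrwe_setting_axioms bump_trapezoid[OF \<open>p < q\<close>] \<open>B \<in> sets nu\<close>
    by (simp add: nrwe_probe_def nrwe_probe_axioms_def)
  note weights_eq = nrwe_probe.integral_probe_deriv_weights[OF this weights a]
  have "(\<lambda>z. indicator (UNIV \<times> S) z *\<^sub>R (indicator B (snd z) * trapezoid p q n (fst z) * a (fst z) (snd z)))
      = (\<lambda>z. indicator B (snd z) * trapezoid p q n (fst z) * (indicator (UNIV \<times> S) z * a (fst z) (snd z)))"
    by (simp add: fun_eq_iff)
  with weights_eq show ?thesis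
    by (simp add: set_lebesgue_integral_def)
qed

lemma box_integral_weights_eq_bstar:
  assumes weights: "ols_weights a"
    and a: "set_integrable (lborel \<Otimes>\<^sub>M nu) (UNIV \<times> S) (\<lambda>z. a (fst z) (snd z))"
    and "p < q" and B[measurable]: "B \<in> sets nu"
  defines "aS \<equiv> \<lambda>z. indicator (UNIV \<times> S) z * a (fst z) (snd z)"
  shows "integrable (lborel \<Otimes>\<^sub>M nu) (\<lambda>z. indicator ({p<..q} \<times> B) z * (aS z - bstar z))"
    and "(\<integral>z. indicator ({p<..q} \<times> B) z * (aS z - bstar z) \<partial>(lborel \<Otimes>\<^sub>M nu)) = 0"
proof -
  have aS: "integrable (lborel \<Otimes>\<^sub>M nu) aS"
    using a by (simp add: set_integrable_def aS_def)
  have aS_measurable[measurable]: "aS \<in> borel_measurable (lborel \<Otimes>\<^sub>M nu)"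
    using borel_measurable_integrable[OF aS] .
  have aS_strip: "integrable (lborel \<Otimes>\<^sub>M nu) (\<lambda>z. indicator {p..q+1} (fst z) * \<bar>aS z\<bar>)"
    by (rule Bochner_Integration.integrable_bound[OF integrable_abs[OF aS]])
       (auto intro!: AE_I2 simp: abs_mult indicator_def)
  note lim_a = tendsto_integral_trapezoid[OF \<open>p < q\<close> B aS_measurable aS_strip]
    and lim_b = tendsto_integral_trapezoid[OF \<open>p < q\<close> B bstar_measurable integrable_abs_bstar_strip]
  have "(\<lambda>n. \<integral>z. indicator B (snd z) * trapezoid p q n (fst z) * bstar z \<partial>(lborel \<Otimes>\<^sub>M nu))
      \<longlonglongrightarrow> (\<integral>z. indicator ({p<..q} \<times> B) z * aS z \<partial>(lborel \<Otimes>\<^sub>M nu))"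
    using lim_a(2) unfolding aS_def integral_trapezoid_weights_eq_bstar[OF weights a \<open>p < q\<close> B] .
  from LIMSEQ_unique[OF this lim_b(2)] lim_a(1) lim_b(1)
  show "integrable (lborel \<Otimes>\<^sub>M nu) (\<lambda>z. indicator ({p<..q} \<times> B) z * (aS z - bstar z))"
    and "(\<integral>z. indicator ({p<..q} \<times> B) z * (aS z - bstar z) \<partial>(lborel \<Otimes>\<^sub>M nu)) = 0"
    by (simp_all add: right_diff_distrib)
qed

lemma AE_weights_eq_bstar:
  assumes weights: "ols_weights a"
    and a: "set_integrable (lborel \<Otimes>\<^sub>M nu) (UNIV \<times> S) (\<lambda>z. a (fst z) (snd z))"
  shows "AE z in lborel \<Otimes>\<^sub>M nu. snd z \<in> S \<longrightarrow> a (fst z) (snd z) = bstar z"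
proof -
  define g where "g z = indicator (UNIV \<times> S) z * a (fst z) (snd z) - bstar z" for z
  have "AE z in lborel \<Otimes>\<^sub>M nu. g z = 0"
  proof (rule AE_zero_if_box_integrals_zero[OF sigma_finite])
    have [measurable]: "(\<lambda>z. indicator (UNIV \<times> S) z * a (fst z) (snd z)) \<in> borel_measurable (lborel \<Otimes>\<^sub>M nu)"
      using borel_measurable_integrable[OF a[unfolded set_integrable_def]] by simp
    show "g \<in> borel_measurable (lborel \<Otimes>\<^sub>M nu)"
      unfolding g_def[abs_def] by measurable
  qed (use box_integral_weights_eq_bstar[OF weights a] in \<open>simp add: g_def\<close>)
  then show ?thesis
  proof eventually_elim
    case (elim z)
    show ?case
    proof
      assume "snd z \<in> S"
      with elim show "a (fst z) (snd z) = bstar z"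
        by (simp add: g_def indicator_def mem_Times_iff)
    qed
  qed
qed

end

theorem proposition2:
  fixes nu :: "(real^'k) measure"
    and fX :: "real^'k \<Rightarrow> real"
    and fT :: "real^'k \<Rightarrow> real \<Rightarrow> real"
    and a :: "real \<Rightarrow> real^'k \<Rightarrow> real"
  assumes nu: "sigma_finite_measure nu" "sets nu = sets borel"
    and fX_meas: "fX \<in> borel_measurable nu"
    and fX_nonneg: "\<And>x. 0 \<le> fX x"
    and fX_prob: "(\<integral>\<^sup>+x. ennreal (fX x) \<partial>nu) = 1"
    and fT_meas: "(\<lambda>z. fT (snd z) (fst z)) \<in> borel_measurable (lborel \<Otimes>\<^sub>M nu)"
    and fT_nonneg: "\<And>x t. 0 \<le> fT x t"
    and fT_cond: "AE x in nu. x \<in> supp_X fX \<longrightarrow>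
           (\<integral>\<^sup>+t. ennreal (fT x t) \<partial>lborel) = 1 \<and>
           integrable lborel (\<lambda>t. t\<^sup>2 * fT x t) \<and> 0 < cond_var fT x"
    and const: "\<exists>j. \<forall>x \<in> supp_X fX. x $ j = 1"
    and lin_mean: "\<exists>\<gamma>::real^'k. AE x in nu. x \<in> supp_X fX \<longrightarrow> cond_mean fT x = inner \<gamma> x"
    and T_sq: "integrable (joint_law nu fX fT) (\<lambda>z. (fst z)\<^sup>2)"
    and X_sq: "\<And>j. integrable (joint_law nu fX fT) (\<lambda>z. (snd z $ j)\<^sup>2)"
    and hyp1: "\<And>m dm. admissible_dgp (joint_law nu fX fT) m dm \<Longrightarrow>
                 ols_defined (joint_law nu fX fT) (\<lambda>z. m (fst z) (snd z)) \<Longrightarrow>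
                 set_integrable (lborel \<Otimes>\<^sub>M nu) (UNIV \<times> supp_X fX)
                    (\<lambda>z. dm (fst z) (snd z) * a (fst z) (snd z)) \<Longrightarrow>
                 ols_coef_T (joint_law nu fX fT) (\<lambda>z. m (fst z) (snd z)) =
                   (LINT z:(UNIV \<times> supp_X fX)|(lborel \<Otimes>\<^sub>M nu).
                      dm (fst z) (snd z) * a (fst z) (snd z))"
    and a_cont: "\<And>x. x \<in> supp_X fX \<Longrightarrow> continuous_on UNIV (\<lambda>t. a t x)"
    and a_diff: "\<And>x t. x \<in> supp_X fX \<Longrightarrow> (\<lambda>s. a s x) differentiable (at t)"
    and a_int: "set_integrable (lborel \<Otimes>\<^sub>M nu) (UNIV \<times> supp_X fX) (\<lambda>z. a (fst z) (snd z))"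
  shows "AE z in (lborel \<Otimes>\<^sub>M nu). snd z \<in> supp_X fX \<longrightarrow>
           a (fst z) (snd z) = nrwe_bstar nu fX fT (fst z) (snd z)"
proof -
  obtain \<gamma> :: "real^'k" where \<gamma>: "AE x in nu. x \<in> supp_X fX \<longrightarrow> cond_mean fT x = inner \<gamma> x"
    using lin_mean by blast
  have cells: "AE x in nu. x \<in> supp_X fX \<longrightarrow> (\<integral>\<^sup>+t. ennreal (fT x t) \<partial>lborel) = 1 \<and>
      integrable lborel (\<lambda>t. t\<^sup>2 * fT x t) \<and> 0 < cond_var fT x \<and> cond_mean fT x = inner \<gamma> x"
    using fT_cond \<gamma> by eventually_elim blast
  interpret nrwe_setting nu fX fT \<gamma>
    by (rule nrwe_setting.intro[OF nu fX_meas fX_nonneg fX_prob fT_meas fT_nonneg cells T_sq X_sq])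
  have "ols_weights a"
    unfolding ols_weights_def using hyp1 by blast
  from AE_weights_eq_bstar[OF this a_int] show ?thesis .
qed

end
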